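(* Assume (A1)–(A5). Let $v$ be a viscosity supersolution of (Q) satisfying $|v(t,x)|\le C(1+|x|^{2\varrho})$ for all $(t,x)\in[0,T]\times\mathbb R^d$, for some $C,\varrho>0$. Then there is $\varpi_0>0$ such that for every $\varpi>\varpi_0$ and $\theta>0$ the function $$w(t,x):=v(t,x)+\theta e^{-\varpi t}\big(1+((|x|-K_{\gamma,\xi})^+)^{2\varrho+2}\big)$$ is also a viscosity supersolution of (Q).
   Context: $T>0$, $d\ge1$; $E\subset\mathbb R^d$ compact; $U$ compact subset of a Euclidean space. (A1) $\xi:[0,T]\times\mathbb R^d\times U\to\mathbb R^d$, $\gamma:[0,T]\times\mathbb R^d\times E\to\mathbb R^d$ jointly continuous with $|x+\xi(t,x,b)|\vee|x+\gamma(t,x,e)|\le K_{\gamma,\xi}\vee|x|$ for a constant $K_{\gamma,\xi}>0$; $\gamma$ Lipschitz in $x$. (A2) $a:[0,T]\times\mathbb R^d\to\mathbb R^d$, $\sigma:[0,T]\times\mathbb R^d\to\mathbb R^{d\times d}$ with $|a|+|\sigma|\le C(1+|x|)$, Lipschitz in $x$ uniformly in $t$. (A3) $f:[0,T]\times\mathbb R^d\times\mathbb R\times\mathbb R^d\to\mathbb R$ continuous in $(t,x)$ uniformly in $(y,z)$, $|f(t,x,0,0)|\le C(1+|x|^\rho)$, $|f(t,x,y,z)-f(t,x,y',z')|\le k_f(|y-y'|+|z-z'|)$. (A4) $\psi$ continuous with polynomial growth, $\sup_b\{\psi(x+\xi(T,x,b))-\ell(T,x,b)\}\le\psi(x)\le\inf_e\{\psi(x+\gamma(T,x,e))+\chi(T,x,e)\}$.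 (A5) $\ell\ge\delta>0$, $\chi\ge0$ jointly continuous, polynomial growth. QVI (Q): for locally bounded $w$ and $t<T$, $\mathcal Mw(t,x)=\sup_{b\in U}\{w(t,x+\xi(t,x,b))-\ell(t,x,b)\}$, $\mathcal Hw(t,x)=\inf_{e\in E}\{w(t,x+\gamma(t,x,e))+\chi(t,x,e)\}$, with $\mathcal Mw(T,x)=\mathcal Hw(T,x)=w(T,x)$; $\mathcal L\varphi=\sum_ja_j\partial_{x_j}\varphi+\frac12\sum_{i,j}(\sigma\sigma^\top)_{ij}\partial^2_{x_ix_j}\varphi$; (Q) is $\min\{v-\mathcal Mv,\max\{v-\mathcal Hv,-\partial_tv-\mathcal Lv-f(t,x,v,\sigma^\top\nabla_xv)\}\}=0$ on $[0,T)\times\mathbb R^d$, $v(T,\cdot)=\psi$. A viscosity supersolution of (Q) is a locally bounded lsc $w$ with $w(T,x)\ge\psi(x)$ such that for all $(t,x)\in[0,T)\times\mathbb R^d$ and all $(p,q,M)$ in the limiting parabolic subjet $\bar J^-w(t,x)$ (limits of $(p_n,q_n,M_n)$ satisfying $w(t',x')\ge w(t_n,x_n)+p_n(t'-t_n)+\langle q_n,x'-x_n\rangle+\frac12\langle x'-x_n,M_n(x'-x_n)\rangle+o(|t'-t_n|+|x'-x_n|^2)$ with $(t_n,x_n,w(t_n,x_n))\to(t,x,w(t,x))$), $\min\{w(t,x)-\mathcal Mw(t,x),\max\{w(t,x)-\mathcal Hw(t,x),-p-q^\top a(t,x)-\frac12\mathrm{tr}(\sigma\sigma^\top(t,x)M)-f(t,x,w(t,x),\sigma^\top(t,x)q)\}\}\ge0$.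 (Equivalently, via $C^{1,2}$ test functions touching from below.) *)

theory Defs
  imports "HOL-Analysis.Analysis" "HOL-Library.Extended_Real"
begin

definition pdom :: "real \<Rightarrow> (real \<times> (real^'d)) set" where
  "pdom T = {0..T} \<times> UNIV"

definition locally_bounded_on :: "real \<Rightarrow> (real \<Rightarrow> real^'d \<Rightarrow> real) \<Rightarrow> bool" where
  "locally_bounded_on T w \<longleftrightarrow>
     (\<forall>(t,x)\<in>pdom T. \<exists>r>0. \<exists>B. \<forall>(s,y)\<in>pdom T.
         dist (s,y) (t,x) < r \<longrightarrow> \<bar>w s y\<bar> \<le> B)"

definition lsc_on :: "real \<Rightarrow> (real \<Rightarrow> real^'d \<Rightarrow> real) \<Rightarrow> bool" where
  "lsc_on T w \<longleftrightarrow>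
     (\<forall>(t,x)\<in>pdom T. \<forall>\<epsilon>>0. \<exists>r>0. \<forall>(s,y)\<in>pdom T.
         dist (s,y) (t,x) < r \<longrightarrow> w t x - \<epsilon> < w s y)"

definition subjet :: "real \<Rightarrow> (real \<Rightarrow> real^'d \<Rightarrow> real) \<Rightarrow> real \<Rightarrow> real^'d
                       \<Rightarrow> (real \<times> (real^'d) \<times> (real^'d^'d)) set" where
  "subjet T w t x = {(p,q,M). \<forall>\<epsilon>>0. \<exists>r>0. \<forall>(s,y)\<in>pdom T.
      \<bar>s - t\<bar> + norm (y - x) < r \<longrightarrow>
        w s y \<ge> w t x + p * (s - t) + q \<bullet> (y - x) + (1/2) * ((y - x) \<bullet> (M *v (y - x)))
                 - \<epsilon> * (\<bar>s - t\<bar> + (norm (y - x))\<^sup>2)}"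

definition limsubjet :: "real \<Rightarrow> (real \<Rightarrow> real^'d \<Rightarrow> real) \<Rightarrow> real \<Rightarrow> real^'d
                       \<Rightarrow> (real \<times> (real^'d) \<times> (real^'d^'d)) set" where
  "limsubjet T w t x = {(p,q,M). \<exists>tn xn pn qn Mn.
      (\<forall>n. (tn n, xn n) \<in> pdom T \<and> (pn n, qn n, Mn n) \<in> subjet T w (tn n) (xn n)) \<and>
      tn \<longlonglongrightarrow> t \<and> xn \<longlonglongrightarrow> x \<and> (\<lambda>n. w (tn n) (xn n)) \<longlonglongrightarrow> w t x \<and>
      pn \<longlonglongrightarrow> p \<and> qn \<longlonglongrightarrow> q \<and> Mn \<longlonglongrightarrow> M}"

text \<open>Intervention operators (extended-real valued: sup over the empty set is -\<infinity>,
  inf over the empty set is +\<infinity>); at t = T they equal w(T,x).\<close>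
definition Mop :: "real \<Rightarrow> 'u set \<Rightarrow> (real \<Rightarrow> real^'d \<Rightarrow> 'u \<Rightarrow> real^'d)
                    \<Rightarrow> (real \<Rightarrow> real^'d \<Rightarrow> 'u \<Rightarrow> real)
                    \<Rightarrow> (real \<Rightarrow> real^'d \<Rightarrow> real) \<Rightarrow> real \<Rightarrow> real^'d \<Rightarrow> ereal" where
  "Mop T U \<xi> ell w t x =
     (if t = T then ereal (w t x)
      else (SUP b\<in>U. ereal (w t (x + \<xi> t x b) - ell t x b)))"

definition Hop :: "real \<Rightarrow> (real^'d) set \<Rightarrow> (real \<Rightarrow> real^'d \<Rightarrow> real^'d \<Rightarrow> real^'d)
                    \<Rightarrow> (real \<Rightarrow> real^'d \<Rightarrow> real^'d \<Rightarrow> real)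
                    \<Rightarrow> (real \<Rightarrow> real^'d \<Rightarrow> real) \<Rightarrow> real \<Rightarrow> real^'d \<Rightarrow> ereal" where
  "Hop T E \<gamma> chi w t x =
     (if t = T then ereal (w t x)
      else (INF e\<in>E. ereal (w t (x + \<gamma> t x e) + chi t x e)))"

definition visc_supersol ::
  "real \<Rightarrow> 'u set \<Rightarrow> (real^'d) set
   \<Rightarrow> (real \<Rightarrow> real^'d \<Rightarrow> 'u \<Rightarrow> real^'d) \<Rightarrow> (real \<Rightarrow> real^'d \<Rightarrow> real^'d \<Rightarrow> real^'d)
   \<Rightarrow> (real \<Rightarrow> real^'d \<Rightarrow> real^'d) \<Rightarrow> (real \<Rightarrow> real^'d \<Rightarrow> real^'d^'d)
   \<Rightarrow> (real \<Rightarrow> real^'d \<Rightarrow> real \<Rightarrow> real^'d \<Rightarrow> real) \<Rightarrow> (real^'d \<Rightarrow> real)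
   \<Rightarrow> (real \<Rightarrow> real^'d \<Rightarrow> 'u \<Rightarrow> real) \<Rightarrow> (real \<Rightarrow> real^'d \<Rightarrow> real^'d \<Rightarrow> real)
   \<Rightarrow> (real \<Rightarrow> real^'d \<Rightarrow> real) \<Rightarrow> bool" where
  "visc_supersol T U E \<xi> \<gamma> a \<sigma> f \<psi> ell chi w \<longleftrightarrow>
     locally_bounded_on T w \<and> lsc_on T w \<and> (\<forall>x. w T x \<ge> \<psi> x) \<and>
     (\<forall>t x p q M. 0 \<le> t \<and> t < T \<and> (p,q,M) \<in> limsubjet T w t x \<longrightarrow>
        min (ereal (w t x) - Mop T U \<xi> ell w t x)
            (max (ereal (w t x) - Hop T E \<gamma> chi w t x)
                 (ereal (- p - q \<bullet> a t x
                         - (1/2) * trace (\<sigma> t x ** transpose (\<sigma> t x) ** M)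
                         - f t x (w t x) (transpose (\<sigma> t x) *v q)))) \<ge> 0)"

end

theory Submission
  imports Defs
begin

text \<open>Write \<open>\<Phi> t x = \<theta> exp (-\<omega> t) (1 + h x)\<close> with \<open>h x = ((|x| - K)\<^sup>+)\<^sup>m\<close>, \<open>m = 2\<rho> + 2 > 2\<close>.
  The jumps \<open>x \<mapsto> x + \<xi>\<close> and \<open>x \<mapsto> x + \<gamma>\<close> stay in the ball of radius \<open>max K |x|\<close> and \<open>h\<close>
  is radial and nondecreasing, so \<open>h\<close> does not increase along jumps and both intervention
  inequalities pass from \<open>v\<close> to \<open>v + \<Phi>\<close>.
  Instead of the Hessian of \<open>h\<close> only a second-order upper expansion
  \<open>h y \<le> h x + Dh x \<bullet> (y - x) + L x |y - x|\<^sup>2\<close> near \<open>x\<close> is needed, with \<open>L x\<close> of order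
  \<open>(1 + (|x| - K)\<^sup>+)\<^sup>m\<^sup>-\<^sup>2\<close>; hence \<open>\<Phi>\<close> has a superjet at every point, and subtracting it maps
  (limiting) subjets of \<open>v + \<Phi>\<close> to (limiting) subjets of \<open>v\<close>.
  In the differential part the resulting first- and second-order shifts and the change in the
  argument of \<open>f\<close> cost at most \<open>C \<theta> exp (-\<omega> t) (1 + h)\<close>, by the linear growth of \<open>a\<close> and \<open>\<sigma>\<close>,
  the Lipschitz continuity of \<open>f\<close> and \<open>|Dh| (1 + |x|) + L (1 + |x|)\<^sup>2 \<le> C (1 + h)\<close>; the time
  derivative of \<open>\<Phi>\<close> contributes \<open>\<omega> \<theta> exp (-\<omega> t) (1 + h)\<close>, which wins as soon as \<open>\<omega> \<ge> C\<close>.\<close>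

lemma powr_second_order_upper_bound:
  fixes m r z :: real
  assumes m: "m > 2" and r: "r > 0" and z: "z > 0"
  shows "z powr m \<le> r powr m + m * r powr (m-1) * (z - r)
           + (m*(m-1)/2) * (max r z) powr (m-2) * (z - r)^2"
proof (cases "z = r")
  case True
  then show ?thesis by simp
next
  case False
  define D where "D = (\<lambda>n::nat. if n = 0 then (\<lambda>z. z powr m)
      else if n = 1 then (\<lambda>z. m * z powr (m-1)) else (\<lambda>z. m*(m-1) * z powr (m-2)))"
  have D_deriv: "\<forall>k t. k < 2 \<and> min r z \<le> t \<and> t \<le> max r z \<longrightarrow> DERIV (D k) t :> D (Suc k) t"
  proof (intro allI impI)
    fix k :: nat and t :: real assume h: "k < 2 \<and> min r z \<le> t \<and> t \<le> max r z"
    then have t: "t > 0" using r z by linarith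
    show "DERIV (D k) t :> D (Suc k) t"
    proof (cases "k = 0")
      case True then show ?thesis using has_real_derivative_powr[OF t, of m] by (simp add: D_def)
    next
      case False then have "k = 1" using h by auto
      then show ?thesis using DERIV_cmult[OF has_real_derivative_powr[OF t, of "m-1"], of m]
        by (simp add: D_def algebra_simps)
    qed
  qed
  obtain t where t: "if z < r then z < t \<and> t < r else r < t \<and> t < z"
     and eq: "D 0 z = (\<Sum>k<2. (D k r / fact k) * (z - r)^k) + (D 2 t / fact 2) * (z - r)^2"
    using Taylor[of 2 D "D 0" "min r z" "max r z" r z] D_deriv False by auto
  have "t > 0" "t \<le> max r z" using t r z by (auto split: if_splits)
  then have "m*(m-1) * t powr (m-2) \<le> m*(m-1) * (max r z) powr (m-2)"
    using m by (intro mult_left_mono powr_mono2) auto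
  then have "(m*(m-1) * t powr (m-2)) / 2 * (z-r)^2 \<le> (m*(m-1)/2) * (max r z) powr (m-2) * (z - r)^2"
    by (intro mult_right_mono) auto
  moreover have "(\<Sum>k<2. (D k r / fact k) * (z - r)^k) = r powr m + m * r powr (m-1) * (z - r)"
    by (simp add: D_def numeral_2_eq_2)
  ultimately show ?thesis using eq by (simp add: D_def)
qed

lemma powr_perturbation_upper_bound:
  fixes m r n w \<epsilon> :: real
  assumes m: "2 < m" and r: "0 < r" "r \<le> n" and \<epsilon>: "\<epsilon> < 1/2" "\<epsilon> < r/4"
    and d: "\<bar>w + \<epsilon>^2 / (2 * n)\<bar> \<le> 3/2 * \<epsilon>"
  shows "(r + (w + \<epsilon>^2 / (2 * n))) powr m
           \<le> r powr m + m * r powr (m-1) * w + 2 * m^2 * (1 + r) powr (m-2) * \<epsilon>^2"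
proof -
  define d where "d = w + \<epsilon>^2 / (2 * n)"
  define P where "P = (1 + r) powr (m-2)"
  have n: "0 < n" using r by linarith
  have rd: "0 < r + d" "d \<le> 1"
    using d \<epsilon> abs_ge_self[of d] abs_ge_minus_self[of d] unfolding d_def by linarith+
  have P: "r powr (m-2) \<le> P" "(max r (r + d)) powr (m-2) \<le> P"
    using r rd m unfolding P_def by (auto intro!: powr_mono2)
  have lin: "m * r powr (m-1) * d \<le> m * r powr (m-1) * w + m/2 * P * \<epsilon>^2"
  proof -
    have "r powr (m-1) = r powr ((m-2) + 1)" by simp
    also have "\<dots> = r powr (m-2) * r powr 1" by (rule powr_add)
    also have "\<dots> \<le> P * n" using r P(1) by (intro mult_mono) (auto simp: P_def)
    finally have "r powr (m-1) / n \<le> P" using n by (simp add: divide_le_eq)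
    then have "m/2 * (r powr (m-1) / n) * \<epsilon>^2 \<le> m/2 * P * \<epsilon>^2"
      using m by (intro mult_right_mono mult_left_mono) auto
    moreover have "m * r powr (m-1) * (\<epsilon>^2 / (2*n)) = m/2 * (r powr (m-1) / n) * \<epsilon>^2"
      by simp
    ultimately show ?thesis unfolding d_def by (simp add: distrib_left)
  qed
  have quad: "(m*(m-1)/2) * (max r (r + d)) powr (m-2) * d^2 \<le> 9/8 * m*(m-1) * P * \<epsilon>^2"
  proof -
    have "\<bar>d\<bar>^2 \<le> (3/2 * \<epsilon>)^2"
      using d unfolding d_def by (intro power_mono) auto
    then have "d^2 \<le> (3/2 * \<epsilon>)^2" by simp
    then have "(m*(m-1)/2) * (max r (r + d)) powr (m-2) * d^2 \<le> (m*(m-1)/2) * P * (3/2 * \<epsilon>)^2"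
      using P(2) m by (intro mult_mono mult_left_mono) (auto simp: P_def)
    also have "\<dots> = 9/8 * m*(m-1) * P * \<epsilon>^2" by (simp add: power2_eq_square)
    finally show ?thesis .
  qed
  have "2*m^2 - (m/2 + 9/8 * m*(m-1)) = 7/8 * (m * m) + 5/8 * m"
    by (simp add: power2_eq_square field_simps)
  moreover have "0 \<le> 7/8 * (m * m) + 5/8 * m" using m by simp
  ultimately have "m/2 + 9/8 * m*(m-1) \<le> 2*m^2" by linarith
  then have "(m/2 + 9/8 * m*(m-1)) * (P * \<epsilon>^2) \<le> 2*m^2 * (P * \<epsilon>^2)"
    by (intro mult_right_mono) (auto simp: P_def)
  moreover have "(m/2 + 9/8 * m*(m-1)) * (P * \<epsilon>^2) = m/2 * P * \<epsilon>^2 + 9/8 * m*(m-1) * P * \<epsilon>^2"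
    by (simp add: algebra_simps)
  moreover have "(r + d) powr m \<le> r powr m + m * r powr (m-1) * d + (m*(m-1)/2) * (max r (r + d)) powr (m-2) * d^2"
    using powr_second_order_upper_bound[OF m r(1) rd(1)] by simp
  ultimately show ?thesis using lin quad unfolding d_def[symmetric] P_def[symmetric] by linarith
qed

lemma one_plus_powr_le:
  fixes r m :: real
  assumes "0 \<le> r" "0 < m"
  shows "(1 + r) powr m \<le> 2 powr m * (1 + r powr m)"
proof (cases "r \<le> 1")
  case True
  have "(1 + r) powr m \<le> 2 powr m" using True assms by (intro powr_mono2) auto
  then show ?thesis by (smt (verit) mult_le_cancel_left1 powr_ge_zero powr_gt_zero)
next
  case False
  have "(1 + r) powr m \<le> (2 * r) powr m" using False assms by (intro powr_mono2) auto
  also have "\<dots> = 2 powr m * r powr m" using False by (simp add: powr_mult)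
  also have "\<dots> \<le> 2 powr m * (1 + r powr m)" by (intro mult_left_mono) auto
  finally show ?thesis .
qed

lemma powr_times_power:
  fixes u m :: real
  assumes "0 < u"
  shows "u powr (m - real k) * u ^ k = u powr m"
  using assms by (simp add: powr_realpow[symmetric] powr_add[symmetric])

lemma norm_add_le_first_order:
  fixes x e :: "'a::real_inner"
  assumes "x \<noteq> 0"
  shows "norm (x + e) \<le> norm x + (x \<bullet> e) / norm x + (norm e)^2 / (2 * norm x)"
proof -
  have "2 * norm x * norm (x + e) \<le> (norm x)^2 + (norm (x + e))^2"
    using sum_squares_bound[of "norm x" "norm (x + e)"] by (simp add: power2_eq_square)
  also have "(norm (x + e))^2 = (norm x)^2 + 2 * (x \<bullet> e) + (norm e)^2"
    by (simp add: power2_norm_eq_inner inner_add_left inner_add_right inner_commute)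
  finally show ?thesis
    using assms by (simp add: field_simps power2_eq_square)
qed

lemma product_increment_le:
  fixes Es Et E' Ay Ax U h \<eta>1 \<eta>2 :: real
  assumes E: "\<bar>Es - Et - E' * h\<bar> \<le> \<eta>1 * \<bar>h\<bar>"
    and A: "\<bar>Ay - Ax\<bar> \<le> \<eta>2" and U: "Ay - Ax \<le> U"
    and \<eta>1: "\<eta>1 \<le> 1" and Et: "0 \<le> Et"
  shows "Es * Ay - Et * Ax \<le> E' * Ax * h + Et * U + (\<eta>1 * \<bar>Ax\<bar> + (\<bar>E'\<bar> + 1) * \<eta>2) * \<bar>h\<bar>"
proof -
  have "(Es - Et - E' * h) * Ax \<le> \<bar>Es - Et - E' * h\<bar> * \<bar>Ax\<bar>"
    by (simp add: abs_mult[symmetric])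
  also have "\<dots> \<le> \<eta>1 * \<bar>h\<bar> * \<bar>Ax\<bar>" using E by (rule mult_right_mono) simp
  finally have t1: "(Es - Et) * Ax \<le> E' * Ax * h + \<eta>1 * \<bar>Ax\<bar> * \<bar>h\<bar>"
    by (simp add: algebra_simps)
  have "\<bar>Es - Et\<bar> \<le> \<bar>E' * h\<bar> + \<bar>Es - Et - E' * h\<bar>"
    using abs_triangle_ineq[of "E' * h" "Es - Et - E' * h"] by simp
  also have "\<dots> \<le> \<bar>E'\<bar> * \<bar>h\<bar> + \<bar>h\<bar>"
    using E mult_right_mono[OF \<eta>1 abs_ge_zero[of h]] by (simp add: abs_mult)
  finally have "\<bar>Es - Et\<bar> \<le> (\<bar>E'\<bar> + 1) * \<bar>h\<bar>" by (simp add: algebra_simps)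
  then have "\<bar>Es - Et\<bar> * \<bar>Ay - Ax\<bar> \<le> (\<bar>E'\<bar> + 1) * \<bar>h\<bar> * \<eta>2"
    using A by (intro mult_mono) auto
  moreover have "(Es - Et) * (Ay - Ax) \<le> \<bar>Es - Et\<bar> * \<bar>Ay - Ax\<bar>"
    by (simp add: abs_mult[symmetric])
  ultimately have "(Es - Et) * (Ay - Ax) \<le> (\<bar>E'\<bar> + 1) * \<bar>h\<bar> * \<eta>2"
    by linarith
  moreover have "Et * (Ay - Ax) \<le> Et * U" using U Et by (rule mult_left_mono)
  moreover have "Es * Ay - Et * Ax = (Es - Et) * Ax + (Es - Et) * (Ay - Ax) + Et * (Ay - Ax)"
    by (simp add: algebra_simps)
  ultimately show ?thesis using t1 by (simp add: algebra_simps)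
qed

lemma inner_scaleR_mat_one: "(e::real^'n) \<bullet> ((c *\<^sub>R mat 1) *v e) = c * (norm e)^2"
  by (simp add: scaleR_matrix_vector_assoc[symmetric] power2_norm_eq_inner)

lemma trace_mult_transpose_self: "trace ((A::real^'n^'n) ** transpose A) = (norm A)^2"
proof -
  have "(norm A)^2 = (\<Sum>i\<in>UNIV. \<Sum>k\<in>UNIV. A$i$k * A$i$k)"
    by (simp add: power2_norm_eq_inner inner_vec_def)
  moreover have "trace (A ** transpose A) = (\<Sum>i\<in>UNIV. \<Sum>k\<in>UNIV. A$i$k * A$i$k)"
    by (simp add: trace_def matrix_matrix_mult_def transpose_def)
  ultimately show ?thesis by simp
qed

lemma norm_transpose_matrix: "norm (transpose (A::real^'n^'n)) = norm A"
proof -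
  have "(norm (transpose A))^2 = (norm A)^2"
    by (metis trace_mult_transpose_self trace_mul_sym transpose_transpose)
  then show ?thesis by (simp add: power2_eq_iff_nonneg)
qed

lemma norm_matrix_vector_mult_le: "norm ((A::real^'n^'m) *v v) \<le> norm A * norm v"
proof -
  have "(norm (A *v v))^2 = (\<Sum>i\<in>UNIV. ((A *v v)$i)^2)"
    unfolding power2_norm_eq_inner by (simp add: inner_vec_def power2_eq_square)
  also have "\<dots> \<le> (\<Sum>i\<in>UNIV. (norm (A$i))^2 * (norm v)^2)"
  proof (intro sum_mono)
    fix i
    have "\<bar>(A *v v)$i\<bar> \<le> norm (A$i) * norm v"
      unfolding matrix_vector_mul_component by (rule Cauchy_Schwarz_ineq2)
    then have "\<bar>(A *v v)$i\<bar>^2 \<le> (norm (A$i) * norm v)^2"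
      by (intro power_mono) auto
    then show "((A *v v)$i)^2 \<le> (norm (A$i))^2 * (norm v)^2" by (simp add: power_mult_distrib)
  qed
  also have "\<dots> = (norm A * norm v)^2"
    by (simp add: power2_norm_eq_inner inner_vec_def sum_distrib_right power_mult_distrib)
  finally show ?thesis by (rule power2_le_imp_le) simp
qed

lemma trace_mult_scaleR_mat_one: "trace ((X::real^'n^'n) ** (c *\<^sub>R mat 1)) = c * trace X"
  by (simp add: matrix_scalar_ac trace_def sum_distrib_left)

lemma ereal_diff_nonneg_iff: "0 \<le> ereal a - b \<longleftrightarrow> b \<le> ereal a"
  by (cases b) auto

definition excess :: "real \<Rightarrow> 'a::real_normed_vector \<Rightarrow> real" where
  "excess K x = max (norm x - K) 0"

definition penalty :: "real \<Rightarrow> real \<Rightarrow> 'a::real_normed_vector \<Rightarrow> real" where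
  "penalty K m x = excess K x powr m"

text \<open>Where \<open>norm x \<le> K\<close> the excess vanishes, so the cut-off \<open>max (norm x) (K/2)\<close>
  only serves to avoid dividing by zero.\<close>
definition penalty_grad :: "real \<Rightarrow> real \<Rightarrow> 'a::real_normed_vector \<Rightarrow> 'a" where
  "penalty_grad K m x = (m * excess K x powr (m-1) / max (norm x) (K/2)) *\<^sub>R x"

definition penalty_curv :: "real \<Rightarrow> real \<Rightarrow> 'a::real_normed_vector \<Rightarrow> real" where
  "penalty_curv K m x = 2 * m^2 * (1 + excess K x) powr (m-2)"

lemma excess_nonneg [simp]: "0 \<le> excess K x"
  by (simp add: excess_def)

lemma penalty_nonneg [simp]: "0 \<le> penalty K m x"
  by (simp add: penalty_def)

lemma penalty_curv_nonneg [simp]: "0 \<le> penalty_curv K m x"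
  by (simp add: penalty_curv_def)

lemma penalty_mono:
  assumes "0 \<le> m" "norm y \<le> max K (norm x)"
  shows "penalty K m y \<le> penalty K m x"
proof -
  have "excess K y \<le> excess K x" using assms(2) unfolding excess_def by (auto simp: max_def)
  then show ?thesis unfolding penalty_def using assms(1) by (intro powr_mono2) auto
qed

lemma penalty_upper_expansion_inside:
  fixes x y :: "'a::real_inner"
  assumes m: "m > 2" and x: "norm x \<le> K" and y: "norm (y - x) < 1"
  shows "penalty K m y \<le> penalty K m x + penalty_grad K m x \<bullet> (y - x)
                          + penalty_curv K m x * (norm (y - x))^2"
proof -
  have "norm y - K \<le> norm (y - x)" using x norm_triangle_ineq2[of y x] by linarith
  then have "penalty K m y \<le> norm (y - x) powr m"
    unfolding penalty_def excess_def using m by (intro powr_mono2) auto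
  also have "\<dots> \<le> norm (y - x) powr 2" using y m by (intro powr_mono') auto
  also have "\<dots> \<le> 2 * m^2 * (norm (y - x))^2"
  proof -
    have "2 * 2 < m * m" using mult_strict_mono[of 2 m 2 m] m by simp
    then have "1 \<le> 2 * m^2" by (simp add: power2_eq_square)
    then show ?thesis by (simp add: powr_numeral mult_le_cancel_right1)
  qed
  finally show ?thesis using x by (simp add: penalty_def penalty_grad_def penalty_curv_def excess_def)
qed

lemma penalty_upper_expansion_outside:
  fixes x y :: "'a::real_inner"
  assumes m: "m > 2" and K: "0 \<le> K" and x: "K < norm x"
    and y: "norm (y - x) < min (1/2) ((norm x - K) / 4)"
  shows "penalty K m y \<le> penalty K m x + penalty_grad K m x \<bullet> (y - x)
                          + penalty_curv K m x * (norm (y - x))^2"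
proof -
  define n where "n = norm x"
  define r where "r = n - K"
  define e where "e = y - x"
  define w where "w = (x \<bullet> e) / n"
  have r: "0 < r" "r \<le> n" and n: "0 < n" using x K by (auto simp: r_def n_def)
  have e: "norm e < 1/2" "norm e < r/4" using y by (auto simp: e_def r_def n_def)
  have d: "\<bar>w + (norm e)^2 / (2 * n)\<bar> \<le> 3/2 * norm e"
  proof -
    have "\<bar>x \<bullet> e\<bar> \<le> n * norm e" using Cauchy_Schwarz_ineq2[of x e] by (simp add: n_def)
    then have "\<bar>w\<bar> \<le> norm e" using n by (simp add: w_def abs_div pos_divide_le_eq mult.commute)
    moreover have "(norm e)^2 \<le> norm e * n" using e r by (simp add: power2_eq_square mult_left_mono)
    then have "(norm e)^2 / (2 * n) \<le> norm e / 2" using n by (simp add: divide_le_eq mult.commute)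
    moreover have "\<bar>w + (norm e)^2 / (2 * n)\<bar> \<le> \<bar>w\<bar> + (norm e)^2 / (2 * n)"
      using abs_triangle_ineq[of w "(norm e)^2 / (2 * n)"] n by simp
    ultimately show ?thesis by linarith
  qed
  have "norm y \<le> n + (w + (norm e)^2 / (2 * n))"
    using norm_add_le_first_order[of x e] n unfolding w_def n_def e_def by auto
  moreover have "0 \<le> r + (w + (norm e)^2 / (2 * n))"
    using d e(2) norm_ge_zero[of e] abs_ge_minus_self[of "w + (norm e)^2 / (2 * n)"] by linarith
  ultimately have "excess K y \<le> r + (w + (norm e)^2 / (2 * n))"
    unfolding excess_def r_def by auto
  then have "penalty K m y \<le> (r + (w + (norm e)^2 / (2 * n))) powr m"
    unfolding penalty_def using m by (intro powr_mono2) auto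
  also have "\<dots> \<le> r powr m + m * r powr (m-1) * w + 2 * m^2 * (1 + r) powr (m-2) * (norm e)^2"
    using powr_perturbation_upper_bound[OF m r e d] .
  also have "\<dots> = penalty K m x + penalty_grad K m x \<bullet> e + penalty_curv K m x * (norm e)^2"
    using x K by (simp add: penalty_def penalty_grad_def penalty_curv_def excess_def r_def n_def w_def)
  finally show ?thesis unfolding e_def .
qed

lemma penalty_upper_expansion:
  fixes x :: "'a::real_inner"
  assumes m: "m > 2" and K: "0 \<le> K"
  shows "\<exists>\<delta>>0. \<forall>y. norm (y - x) < \<delta> \<longrightarrow>
           penalty K m y \<le> penalty K m x + penalty_grad K m x \<bullet> (y - x)
                          + penalty_curv K m x * (norm (y - x))^2"
proof (cases "norm x \<le> K")
  case True
  then show ?thesis using penalty_upper_expansion_inside[OF m True] by (intro exI[of _ 1]) auto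
next
  case False
  then show ?thesis using penalty_upper_expansion_outside[OF m K, of x]
    by (intro exI[of _ "min (1/2) ((norm x - K) / 4)"]) auto
qed

lemma continuous_on_penalty: "0 < m \<Longrightarrow> continuous_on UNIV (penalty K m)"
  unfolding penalty_def excess_def by (intro continuous_on_powr' continuous_intros) auto

lemma continuous_on_penalty_grad:
  assumes "1 < m" "0 < K"
  shows "continuous_on UNIV (penalty_grad K m :: 'a::real_normed_vector \<Rightarrow> 'a)"
  unfolding penalty_grad_def excess_def using assms
  by (intro continuous_on_powr' continuous_intros) auto

lemma continuous_on_penalty_curv: "2 < m \<Longrightarrow> continuous_on UNIV (penalty_curv K m)"
  unfolding penalty_curv_def excess_def by (intro continuous_on_powr' continuous_intros) auto

lemma one_plus_norm_le_excess:
  assumes "0 \<le> K"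
  shows "1 + norm x \<le> (1 + K) * (1 + excess K x)"
proof -
  have "norm x \<le> K + excess K x" by (simp add: excess_def)
  moreover have "0 \<le> K * excess K x" using assms by simp
  ultimately show ?thesis by (simp add: algebra_simps)
qed

lemma penalty_grad_growth:
  assumes m: "1 < m" and K: "0 < K"
  shows "norm (penalty_grad K m x) * (1 + norm x) \<le> m * (1 + K) * 2 powr m * (1 + penalty K m x)"
proof -
  define u where "u = 1 + excess K x"
  have u: "1 \<le> u" by (simp add: u_def)
  have "norm (penalty_grad K m x) = m * excess K x powr (m-1) * (norm x / max (norm x) (K/2))"
    unfolding penalty_grad_def using m K by simp
  also have "\<dots> \<le> m * u powr (m-1) * 1"
    using m K by (intro mult_mono powr_mono2) (auto simp: u_def divide_le_eq)
  finally have "norm (penalty_grad K m x) * (1 + norm x) \<le> m * u powr (m-1) * ((1 + K) * u)"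
    using one_plus_norm_le_excess[of K x] K m unfolding u_def
    by (simp add: mult_mono)
  also have "\<dots> = m * (1 + K) * u powr m"
    using powr_times_power[of u m 1] u by simp
  also have "\<dots> \<le> m * (1 + K) * (2 powr m * (1 + penalty K m x))"
    using one_plus_powr_le[of "excess K x" m] m K unfolding u_def penalty_def
    by (intro mult_left_mono) auto
  finally show ?thesis by (simp add: mult.assoc)
qed

lemma penalty_curv_growth:
  assumes m: "2 < m" and K: "0 \<le> K"
  shows "penalty_curv K m x * (1 + norm x)^2 \<le> 2 * m^2 * (1 + K)^2 * 2 powr m * (1 + penalty K m x)"
proof -
  define u where "u = 1 + excess K x"
  have u: "1 \<le> u" by (simp add: u_def)
  have "(1 + norm x)^2 \<le> ((1 + K) * u)^2"
    using one_plus_norm_le_excess[OF K, of x] unfolding u_def by (intro power_mono) auto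
  then have "penalty_curv K m x * (1 + norm x)^2 \<le> 2 * m^2 * u powr (m-2) * ((1 + K) * u)^2"
    unfolding penalty_curv_def u_def by (intro mult_left_mono) auto
  also have "\<dots> = 2 * m^2 * (1 + K)^2 * u powr m"
    using powr_times_power[of u m 2] u by (simp add: power_mult_distrib)
  also have "\<dots> \<le> 2 * m^2 * (1 + K)^2 * (2 powr m * (1 + penalty K m x))"
    using one_plus_powr_le[of "excess K x" m] m unfolding u_def penalty_def
    by (intro mult_left_mono) auto
  finally show ?thesis by (simp add: mult.assoc)
qed

definition penalty_rate :: "real \<Rightarrow> real \<Rightarrow> real \<Rightarrow> real \<Rightarrow> real" where
  "penalty_rate K m Ca kf = 2 powr m * ((1 + kf) * m * (1 + K) * Ca + 2 * m^2 * (1 + K)^2 * Ca^2) + kf"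

lemma penalty_rate_nonneg: "0 \<le> K \<Longrightarrow> 0 \<le> m \<Longrightarrow> 0 \<le> Ca \<Longrightarrow> 0 \<le> kf \<Longrightarrow> 0 \<le> penalty_rate K m Ca kf"
  by (simp add: penalty_rate_def)

lemma penalty_operator_growth:
  assumes K: "0 < K" and m: "2 < m" and Ca: "0 \<le> Ca" and kf: "0 \<le> kf"
  shows "norm (penalty_grad K m x) * (Ca * (1 + norm x)) + penalty_curv K m x * (Ca * (1 + norm x))^2
           + kf * (Ca * (1 + norm x)) * norm (penalty_grad K m x) + kf * (1 + penalty K m x)
         \<le> penalty_rate K m Ca kf * (1 + penalty K m x)"
proof -
  have "(1 + kf) * Ca * (norm (penalty_grad K m x) * (1 + norm x))
          \<le> (1 + kf) * Ca * (m * (1 + K) * 2 powr m * (1 + penalty K m x))"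
    using penalty_grad_growth[of m K x] K m Ca kf by (intro mult_left_mono) auto
  moreover have "Ca^2 * (penalty_curv K m x * (1 + norm x)^2)
          \<le> Ca^2 * (2 * m^2 * (1 + K)^2 * 2 powr m * (1 + penalty K m x))"
    using penalty_curv_growth[of m K x] K m by (intro mult_left_mono) auto
  moreover have "norm (penalty_grad K m x) * (Ca * (1 + norm x)) + penalty_curv K m x * (Ca * (1 + norm x))^2
           + kf * (Ca * (1 + norm x)) * norm (penalty_grad K m x)
      = (1 + kf) * Ca * (norm (penalty_grad K m x) * (1 + norm x))
           + Ca^2 * (penalty_curv K m x * (1 + norm x)^2)"
    by (simp only: power_mult_distrib) (simp add: algebra_simps)
  moreover have "penalty_rate K m Ca kf * (1 + penalty K m x)
      = (1 + kf) * Ca * (m * (1 + K) * 2 powr m * (1 + penalty K m x))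
        + Ca^2 * (2 * m^2 * (1 + K)^2 * 2 powr m * (1 + penalty K m x)) + kf * (1 + penalty K m x)"
    by (simp add: penalty_rate_def algebra_simps)
  ultimately show ?thesis by linarith
qed

definition superjet :: "(real \<Rightarrow> real^'d \<Rightarrow> real) \<Rightarrow> real \<Rightarrow> real^'d
                       \<Rightarrow> (real \<times> (real^'d) \<times> (real^'d^'d)) set" where
  "superjet \<Phi> t x = {(p,q,M). \<forall>\<epsilon>>0. \<exists>r>0. \<forall>s y.
      \<bar>s - t\<bar> + norm (y - x) < r \<longrightarrow>
        \<Phi> s y \<le> \<Phi> t x + p * (s - t) + q \<bullet> (y - x) + (1/2) * ((y - x) \<bullet> (M *v (y - x)))
                 + \<epsilon> * (\<bar>s - t\<bar> + (norm (y - x))\<^sup>2)}"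

lemma product_superjet:
  fixes A :: "real^'d \<Rightarrow> real"
  assumes E: "(E has_real_derivative E') (at t)" and Et: "0 \<le> E t"
    and A: "isCont A x"
    and A_upper: "\<exists>\<delta>>0. \<forall>y. norm (y - x) < \<delta> \<longrightarrow> A y \<le> A x + q \<bullet> (y - x) + L * (norm (y - x))^2"
  shows "(E' * A x, E t *\<^sub>R q, (2 * E t * L) *\<^sub>R mat 1) \<in> superjet (\<lambda>s y. E s * A y) t x"
proof -
  have "\<exists>r>0. \<forall>s y. \<bar>s - t\<bar> + norm (y - x) < r \<longrightarrow>
          E s * A y \<le> E t * A x + E' * A x * (s - t) + (E t *\<^sub>R q) \<bullet> (y - x)
            + (1/2) * ((y - x) \<bullet> (((2 * E t * L) *\<^sub>R mat 1) *v (y - x)))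
            + \<epsilon> * (\<bar>s - t\<bar> + (norm (y - x))\<^sup>2)" if \<epsilon>: "0 < \<epsilon>" for \<epsilon>
  proof -
    define \<eta>1 where "\<eta>1 = min 1 (\<epsilon> / (2 * (\<bar>A x\<bar> + 1)))"
    define \<eta>2 where "\<eta>2 = \<epsilon> / (2 * (\<bar>E'\<bar> + 1))"
    have \<eta>: "0 < \<eta>1" "\<eta>1 \<le> 1" "0 < \<eta>2" "\<eta>1 * \<bar>A x\<bar> + (\<bar>E'\<bar> + 1) * \<eta>2 \<le> \<epsilon>"
    proof -
      have "\<eta>1 * (\<bar>A x\<bar> + 1) \<le> \<epsilon> / (2 * (\<bar>A x\<bar> + 1)) * (\<bar>A x\<bar> + 1)"
        unfolding \<eta>1_def by (intro mult_right_mono) auto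
      also have "\<dots> = \<epsilon>/2" by (simp add: field_simps)
      finally have "\<eta>1 * \<bar>A x\<bar> + \<eta>1 \<le> \<epsilon>/2" by (simp add: distrib_left)
      moreover have "0 < \<eta>1" using \<epsilon> by (simp add: \<eta>1_def)
      moreover have "(\<bar>E'\<bar> + 1) * \<eta>2 = \<epsilon>/2" by (simp add: \<eta>2_def field_simps)
      ultimately show "\<eta>1 * \<bar>A x\<bar> + (\<bar>E'\<bar> + 1) * \<eta>2 \<le> \<epsilon>" by linarith
    qed (use \<epsilon> in \<open>auto simp: \<eta>1_def \<eta>2_def\<close>)
    obtain d1 where d1: "0 < d1" "\<forall>s. \<bar>s - t\<bar> < d1 \<longrightarrow> \<bar>E s - E t - E' * (s - t)\<bar> \<le> \<eta>1 * \<bar>s - t\<bar>"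
      using E \<eta>(1) unfolding has_field_derivative_def has_derivative_at_alt by (auto simp: mult.commute)
    obtain d2 where d2: "0 < d2" "\<forall>y. dist y x < d2 \<longrightarrow> \<bar>A y - A x\<bar> < \<eta>2"
      using A \<eta>(3) unfolding continuous_at_eps_delta dist_real_def by blast
    obtain d3 where d3: "0 < d3"
      "\<forall>y. norm (y - x) < d3 \<longrightarrow> A y \<le> A x + q \<bullet> (y - x) + L * (norm (y - x))^2"
      using A_upper by blast
    show ?thesis
    proof (intro exI[of _ "min d1 (min d2 d3)"] conjI allI impI)
      show "0 < min d1 (min d2 d3)" using d1 d2 d3 by simp
      fix s y assume "\<bar>s - t\<bar> + norm (y - x) < min d1 (min d2 d3)"
      then have "\<bar>s - t\<bar> < d1" "dist y x < d2" "norm (y - x) < d3"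
        using norm_ge_zero[of "y - x"] abs_ge_zero[of "s - t"] unfolding dist_norm by linarith+
      then have "\<bar>E s - E t - E' * (s - t)\<bar> \<le> \<eta>1 * \<bar>s - t\<bar>" "\<bar>A y - A x\<bar> \<le> \<eta>2"
        "A y - A x \<le> q \<bullet> (y - x) + L * (norm (y - x))^2"
        using d1(2) d2(2) d3(2) by (auto simp: less_imp_le)
      then have "E s * A y - E t * A x \<le> E' * A x * (s - t) + E t * (q \<bullet> (y - x) + L * (norm (y - x))^2)
                   + (\<eta>1 * \<bar>A x\<bar> + (\<bar>E'\<bar> + 1) * \<eta>2) * \<bar>s - t\<bar>"
        using \<eta>(2) Et by (rule product_increment_le)
      also have "\<dots> \<le> E' * A x * (s - t) + E t * (q \<bullet> (y - x) + L * (norm (y - x))^2)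
                   + \<epsilon> * (\<bar>s - t\<bar> + (norm (y - x))\<^sup>2)"
      proof -
        have "0 \<le> \<epsilon> * (norm (y - x))\<^sup>2" using \<epsilon> by simp
        then show ?thesis
          using mult_right_mono[OF \<eta>(4) abs_ge_zero[of "s - t"]] unfolding distrib_left by linarith
      qed
      also have "E t * (q \<bullet> (y - x) + L * (norm (y - x))^2) = (E t *\<^sub>R q) \<bullet> (y - x)
            + (1/2) * ((y - x) \<bullet> (((2 * E t * L) *\<^sub>R mat 1) *v (y - x)))"
        unfolding inner_scaleR_mat_one by (simp add: algebra_simps)
      finally show "E s * A y \<le> E t * A x + E' * A x * (s - t) + (E t *\<^sub>R q) \<bullet> (y - x)
            + (1/2) * ((y - x) \<bullet> (((2 * E t * L) *\<^sub>R mat 1) *v (y - x)))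
            + \<epsilon> * (\<bar>s - t\<bar> + (norm (y - x))\<^sup>2)"
        by simp
    qed
  qed
  then show ?thesis by (simp add: superjet_def)
qed

lemma subjet_diff_superjet:
  assumes w: "(p, q, M) \<in> subjet T (\<lambda>s y. v s y + \<Phi> s y) t x"
    and \<Phi>: "(p', q', M') \<in> superjet \<Phi> t x"
  shows "(p - p', q - q', M - M') \<in> subjet T v t x"
proof -
  have "\<exists>r>0. \<forall>(s,y)\<in>pdom T. \<bar>s - t\<bar> + norm (y - x) < r \<longrightarrow>
          v s y \<ge> v t x + (p - p') * (s - t) + (q - q') \<bullet> (y - x)
                 + (1/2) * ((y - x) \<bullet> ((M - M') *v (y - x)))
                 - \<epsilon> * (\<bar>s - t\<bar> + (norm (y - x))\<^sup>2)" if \<epsilon>: "0 < \<epsilon>" for \<epsilon>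
  proof -
    have w': "\<forall>\<epsilon>>0. \<exists>r>0. \<forall>(s,y)\<in>pdom T. \<bar>s - t\<bar> + norm (y - x) < r \<longrightarrow>
        v s y + \<Phi> s y \<ge> v t x + \<Phi> t x + p * (s - t) + q \<bullet> (y - x)
          + (1/2) * ((y - x) \<bullet> (M *v (y - x))) - \<epsilon> * (\<bar>s - t\<bar> + (norm (y - x))\<^sup>2)"
      using w by (simp add: subjet_def)
    have \<Phi>': "\<forall>\<epsilon>>0. \<exists>r>0. \<forall>s y. \<bar>s - t\<bar> + norm (y - x) < r \<longrightarrow>
        \<Phi> s y \<le> \<Phi> t x + p' * (s - t) + q' \<bullet> (y - x)
          + (1/2) * ((y - x) \<bullet> (M' *v (y - x))) + \<epsilon> * (\<bar>s - t\<bar> + (norm (y - x))\<^sup>2)"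
      using \<Phi> by (simp add: superjet_def)
    obtain r1 where r1: "0 < r1" "\<forall>(s,y)\<in>pdom T. \<bar>s - t\<bar> + norm (y - x) < r1 \<longrightarrow>
        v s y + \<Phi> s y \<ge> v t x + \<Phi> t x + p * (s - t) + q \<bullet> (y - x)
          + (1/2) * ((y - x) \<bullet> (M *v (y - x))) - \<epsilon>/2 * (\<bar>s - t\<bar> + (norm (y - x))\<^sup>2)"
      using w'[rule_format, OF half_gt_zero[OF \<epsilon>]] by (elim exE conjE) (rule that)
    obtain r2 where r2: "0 < r2" "\<forall>s y. \<bar>s - t\<bar> + norm (y - x) < r2 \<longrightarrow>
        \<Phi> s y \<le> \<Phi> t x + p' * (s - t) + q' \<bullet> (y - x)
          + (1/2) * ((y - x) \<bullet> (M' *v (y - x))) + \<epsilon>/2 * (\<bar>s - t\<bar> + (norm (y - x))\<^sup>2)"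
      using \<Phi>'[rule_format, OF half_gt_zero[OF \<epsilon>]] by (elim exE conjE) (rule that)
    have "v s y \<ge> v t x + (p - p') * (s - t) + (q - q') \<bullet> (y - x)
                 + (1/2) * ((y - x) \<bullet> ((M - M') *v (y - x)))
                 - \<epsilon> * (\<bar>s - t\<bar> + (norm (y - x))\<^sup>2)"
      if "(s,y) \<in> pdom T" "\<bar>s - t\<bar> + norm (y - x) < min r1 r2" for s y
    proof -
      have "v s y + \<Phi> s y \<ge> v t x + \<Phi> t x + p * (s - t) + q \<bullet> (y - x)
          + (1/2) * ((y - x) \<bullet> (M *v (y - x))) - \<epsilon>/2 * (\<bar>s - t\<bar> + (norm (y - x))\<^sup>2)"
        using bspec[OF r1(2) that(1)] that(2) by simp
      moreover have "\<Phi> s y \<le> \<Phi> t x + p' * (s - t) + q' \<bullet> (y - x)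
          + (1/2) * ((y - x) \<bullet> (M' *v (y - x))) + \<epsilon>/2 * (\<bar>s - t\<bar> + (norm (y - x))\<^sup>2)"
        using r2(2) that(2) by simp
      moreover have "(q - q') \<bullet> (y - x) = q \<bullet> (y - x) - q' \<bullet> (y - x)"
        and "(y - x) \<bullet> ((M - M') *v (y - x)) = (y - x) \<bullet> (M *v (y - x)) - (y - x) \<bullet> (M' *v (y - x))"
        by (simp_all add: inner_diff_left inner_diff_right matrix_vector_mult_diff_rdistrib)
      ultimately show ?thesis by (simp add: algebra_simps)
    qed
    then show ?thesis using r1(1) r2(1) by (intro exI[of _ "min r1 r2"]) auto
  qed
  then show ?thesis by (simp add: subjet_def)
qed

lemma limsubjet_diff_superjet:
  assumes J: "(p, q, M) \<in> limsubjet T (\<lambda>s y. v s y + \<Phi> s y) t x"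
    and super: "\<And>s y. (P s y, Q s y, N s y) \<in> superjet \<Phi> s y"
    and cont: "isCont (\<lambda>z. \<Phi> (fst z) (snd z)) (t, x)" "isCont (\<lambda>z. P (fst z) (snd z)) (t, x)"
      "isCont (\<lambda>z. Q (fst z) (snd z)) (t, x)" "isCont (\<lambda>z. N (fst z) (snd z)) (t, x)"
  shows "(p - P t x, q - Q t x, M - N t x) \<in> limsubjet T v t x"
proof -
  obtain tn xn pn qn Mn where
    jets: "\<forall>n. (tn n, xn n) \<in> pdom T \<and> (pn n, qn n, Mn n) \<in> subjet T (\<lambda>s y. v s y + \<Phi> s y) (tn n) (xn n)"
    and lim: "tn \<longlonglongrightarrow> t" "xn \<longlonglongrightarrow> x" "(\<lambda>n. v (tn n) (xn n) + \<Phi> (tn n) (xn n)) \<longlonglongrightarrow> v t x + \<Phi> t x"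
      "pn \<longlonglongrightarrow> p" "qn \<longlonglongrightarrow> q" "Mn \<longlonglongrightarrow> M"
    using J unfolding limsubjet_def by blast
  have z: "(\<lambda>n. (tn n, xn n)) \<longlonglongrightarrow> (t, x)" using lim(1,2) by (rule tendsto_Pair)
  have along: "(\<lambda>n. F (tn n) (xn n)) \<longlonglongrightarrow> F t x" if "isCont (\<lambda>z. F (fst z) (snd z)) (t, x)"
    for F :: "real \<Rightarrow> _ \<Rightarrow> 'b::topological_space"
    using isCont_tendsto_compose[OF that z] by simp
  have "(\<lambda>n. (v (tn n) (xn n) + \<Phi> (tn n) (xn n)) - \<Phi> (tn n) (xn n)) \<longlonglongrightarrow> (v t x + \<Phi> t x) - \<Phi> t x"
    using lim(3) along[OF cont(1)] by (rule tendsto_diff)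
  then have "(\<lambda>n. v (tn n) (xn n)) \<longlonglongrightarrow> v t x" by simp
  moreover have "\<forall>n. (tn n, xn n) \<in> pdom T \<and>
      (pn n - P (tn n) (xn n), qn n - Q (tn n) (xn n), Mn n - N (tn n) (xn n)) \<in> subjet T v (tn n) (xn n)"
    using jets subjet_diff_superjet super by blast
  moreover have "(\<lambda>n. pn n - P (tn n) (xn n)) \<longlonglongrightarrow> p - P t x"
    "(\<lambda>n. qn n - Q (tn n) (xn n)) \<longlonglongrightarrow> q - Q t x"
    "(\<lambda>n. Mn n - N (tn n) (xn n)) \<longlonglongrightarrow> M - N t x"
    using lim(4-6) along[OF cont(2)] along[OF cont(3)] along[OF cont(4)] by (auto intro: tendsto_diff)
  ultimately show ?thesis
    unfolding limsubjet_def mem_Collect_eq case_prod_conv using lim(1,2)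
    by (intro exI[of _ tn] exI[of _ xn] exI[of _ "\<lambda>n. pn n - P (tn n) (xn n)"]
        exI[of _ "\<lambda>n. qn n - Q (tn n) (xn n)"] exI[of _ "\<lambda>n. Mn n - N (tn n) (xn n)"]) auto
qed

lemma penalty_superjet:
  fixes x :: "real^'d"
  assumes K: "0 \<le> K" and m: "2 < m" and \<theta>: "0 \<le> \<theta>"
  shows "(- vp * (\<theta> * exp (- vp * t)) * (1 + penalty K m x),
          (\<theta> * exp (- vp * t)) *\<^sub>R penalty_grad K m x,
          (2 * (\<theta> * exp (- vp * t)) * penalty_curv K m x) *\<^sub>R mat 1)
         \<in> superjet (\<lambda>s y. \<theta> * exp (- vp * s) * (1 + penalty K m y)) t x"
proof (rule product_superjet)
  show "((\<lambda>s. \<theta> * exp (- vp * s)) has_real_derivative - vp * (\<theta> * exp (- vp * t))) (at t)"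
    by (auto intro!: derivative_eq_intros)
  show "isCont (\<lambda>y. 1 + penalty K m y) x"
    using continuous_on_penalty[of m K, where 'a="real^'d"] m
    by (intro continuous_intros) (simp add: continuous_on_eq_continuous_at)
  show "\<exists>\<delta>>0. \<forall>y. norm (y - x) < \<delta> \<longrightarrow> 1 + penalty K m y
          \<le> 1 + penalty K m x + penalty_grad K m x \<bullet> (y - x) + penalty_curv K m x * (norm (y - x))^2"
    using penalty_upper_expansion[OF m K, of x] by (simp add: add.assoc)
qed (use \<theta> in simp)

lemma limsubjet_add_penalty:
  fixes x :: "real^'d"
  assumes K: "0 < K" and m: "2 < m" and \<theta>: "0 \<le> \<theta>"
    and J: "(p, q, M) \<in> limsubjet T (\<lambda>s y. v s y + \<theta> * exp (- vp * s) * (1 + penalty K m y)) t x"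
  shows "(p + vp * (\<theta> * exp (- vp * t)) * (1 + penalty K m x),
          q - (\<theta> * exp (- vp * t)) *\<^sub>R penalty_grad K m x,
          M - (2 * (\<theta> * exp (- vp * t)) * penalty_curv K m x) *\<^sub>R mat 1) \<in> limsubjet T v t x"
proof -
  have along_snd: "isCont (\<lambda>z. g (snd z)) z" if "continuous_on UNIV g"
    for g :: "real^'d \<Rightarrow> 'b::topological_space" and z :: "real \<times> (real^'d)"
    using that by (intro isCont_o2[OF isCont_snd[OF continuous_ident]])
      (simp add: continuous_on_eq_continuous_at)
  note cont = along_snd[OF continuous_on_penalty] along_snd[OF continuous_on_penalty_grad]
    along_snd[OF continuous_on_penalty_curv]
  have "(p - - vp * (\<theta> * exp (- vp * t)) * (1 + penalty K m x),
          q - (\<theta> * exp (- vp * t)) *\<^sub>R penalty_grad K m x,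
          M - (2 * (\<theta> * exp (- vp * t)) * penalty_curv K m x) *\<^sub>R mat 1) \<in> limsubjet T v t x"
    by (rule limsubjet_diff_superjet[OF J penalty_superjet[OF less_imp_le[OF K] m \<theta>]])
       (use K m in \<open>auto intro!: continuous_intros cont\<close>)
  then show ?thesis by simp
qed

lemma locally_bounded_on_add_continuous:
  fixes v \<Phi> :: "real \<Rightarrow> real^'d \<Rightarrow> real"
  assumes v: "locally_bounded_on T v" and \<Phi>: "continuous_on UNIV (\<lambda>z. \<Phi> (fst z) (snd z))"
  shows "locally_bounded_on T (\<lambda>s y. v s y + \<Phi> s y)"
  unfolding locally_bounded_on_def
proof (clarify)
  fix t and x :: "real^'d" assume tx: "(t, x) \<in> pdom T"
  obtain r B where r: "0 < r" "\<forall>(s,y)\<in>pdom T. dist (s,y) (t,x) < r \<longrightarrow> \<bar>v s y\<bar> \<le> B"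
    using bspec[OF v[unfolded locally_bounded_on_def] tx] by (auto simp only: case_prod_conv)
  obtain r' where r': "0 < r'" "\<forall>z. dist z (t,x) < r' \<longrightarrow> dist (\<Phi> (fst z) (snd z)) (\<Phi> t x) < 1"
    using \<Phi> unfolding continuous_on_iff by (metis UNIV_I fst_conv snd_conv zero_less_one)
  have "\<bar>v s y + \<Phi> s y\<bar> \<le> B + \<bar>\<Phi> t x\<bar> + 1"
    if "(s,y) \<in> pdom T" "dist (s,y) (t,x) < min r r'" for s y
  proof -
    have "\<bar>v s y\<bar> \<le> B" using r(2) that by auto
    moreover have "\<bar>\<Phi> s y - \<Phi> t x\<bar> < 1" using r'(2) that by (auto simp: dist_real_def)
    ultimately show ?thesis by linarith
  qed
  then show "\<exists>r>0. \<exists>B. \<forall>(s,y)\<in>pdom T. dist (s,y) (t,x) < r \<longrightarrow> \<bar>v s y + \<Phi> s y\<bar> \<le> B"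
    using r(1) r'(1) by (intro exI[of _ "min r r'"] conjI exI[of _ "B + \<bar>\<Phi> t x\<bar> + 1"]) auto
qed

lemma lsc_on_add_continuous:
  fixes v \<Phi> :: "real \<Rightarrow> real^'d \<Rightarrow> real"
  assumes v: "lsc_on T v" and \<Phi>: "continuous_on UNIV (\<lambda>z. \<Phi> (fst z) (snd z))"
  shows "lsc_on T (\<lambda>s y. v s y + \<Phi> s y)"
  unfolding lsc_on_def
proof (clarify)
  fix t \<epsilon> :: real and x :: "real^'d" assume tx: "(t, x) \<in> pdom T" and \<epsilon>: "0 < \<epsilon>"
  obtain r where r: "0 < r" "\<forall>(s,y)\<in>pdom T. dist (s,y) (t,x) < r \<longrightarrow> v t x - \<epsilon>/2 < v s y"
    using bspec[OF v[unfolded lsc_on_def] tx, unfolded case_prod_conv, rule_format, OF half_gt_zero[OF \<epsilon>]]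
    by (elim exE conjE) (rule that)
  obtain r' where r': "0 < r'" "\<forall>z. dist z (t,x) < r' \<longrightarrow> dist (\<Phi> (fst z) (snd z)) (\<Phi> t x) < \<epsilon>/2"
    using \<Phi> \<epsilon> unfolding continuous_on_iff by (metis UNIV_I fst_conv snd_conv half_gt_zero)
  have "v t x + \<Phi> t x - \<epsilon> < v s y + \<Phi> s y"
    if "(s,y) \<in> pdom T" "dist (s,y) (t,x) < min r r'" for s y
  proof -
    have "v t x - \<epsilon>/2 < v s y" using r(2) that by auto
    moreover have "\<bar>\<Phi> s y - \<Phi> t x\<bar> < \<epsilon>/2" using r'(2) that by (auto simp: dist_real_def)
    ultimately show ?thesis by linarith
  qed
  then show "\<exists>r>0. \<forall>(s,y)\<in>pdom T. dist (s,y) (t,x) < r \<longrightarrow> v t x + \<Phi> t x - \<epsilon> < v s y + \<Phi> s y"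
    using r(1) r'(1) by (intro exI[of _ "min r r'"]) auto
qed

lemma Mop_le_of_shift:
  assumes v: "Mop T U \<xi> ell v t x \<le> ereal (v t x)"
    and shift: "\<forall>b\<in>U. w t (x + \<xi> t x b) - v t (x + \<xi> t x b) \<le> w t x - v t x"
  shows "Mop T U \<xi> ell w t x \<le> ereal (w t x)"
proof (cases "t = T")
  case False
  have "w t (x + \<xi> t x b) - ell t x b \<le> w t x" if "b \<in> U" for b
  proof -
    have "v t (x + \<xi> t x b) - ell t x b \<le> v t x"
      using v False that by (auto simp: Mop_def SUP_le_iff)
    then show ?thesis using shift that by auto
  qed
  then show ?thesis using False by (simp add: Mop_def SUP_le_iff)
qed (simp add: Mop_def)

lemma Hop_le_of_shift:
  assumes v: "Hop T E \<gamma> chi v t x \<le> ereal (v t x)"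
    and shift: "\<forall>e\<in>E. w t (x + \<gamma> t x e) - v t (x + \<gamma> t x e) \<le> w t x - v t x"
  shows "Hop T E \<gamma> chi w t x \<le> ereal (w t x)"
proof (cases "t = T")
  case False
  have "(INF e\<in>E. ereal (w t (x + \<gamma> t x e) + chi t x e)) \<le> ereal (w t x) + ereal \<delta>"
    if \<delta>: "0 < \<delta>" for \<delta>
  proof -
    have "(INF e\<in>E. ereal (v t (x + \<gamma> t x e) + chi t x e)) \<le> ereal (v t x)"
      using v False by (simp add: Hop_def)
    also have "\<dots> < ereal (v t x + \<delta>)" using \<delta> by simp
    finally obtain e where e: "e \<in> E" "v t (x + \<gamma> t x e) + chi t x e < v t x + \<delta>"
      unfolding INF_less_iff by auto
    have "(INF e\<in>E. ereal (w t (x + \<gamma> t x e) + chi t x e)) \<le> ereal (w t (x + \<gamma> t x e) + chi t x e)"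
      using e(1) by (rule INF_lower)
    also have "\<dots> \<le> ereal (w t x) + ereal \<delta>" using e shift by auto
    finally show ?thesis .
  qed
  then show ?thesis using False by (simp add: Hop_def ereal_le_epsilon2)
qed (simp add: Hop_def)

lemma pde_part_add_shift:
  fixes S M :: "real^'d^'d" and b Q q :: "real^'d" and F :: "real \<Rightarrow> real^'d \<Rightarrow> real"
  assumes c: "0 \<le> c" and A: "0 \<le> A" and kf: "0 \<le> kf" and \<Lambda>: "0 \<le> \<Lambda>"
    and b: "norm b \<le> g" and S: "norm S \<le> g"
    and F: "\<forall>y y' z z'. \<bar>F y z - F y' z'\<bar> \<le> kf * (\<bar>y - y'\<bar> + norm (z - z'))"
    and growth: "norm Q * g + \<Lambda> * g^2 + kf * g * norm Q + kf * A \<le> vp * A"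
    and Fv: "0 \<le> - (p + vp * c * A) - (q - c *\<^sub>R Q) \<bullet> b
               - (1/2) * trace (S ** transpose S ** (M - (2 * c * \<Lambda>) *\<^sub>R mat 1))
               - F u (transpose S *v (q - c *\<^sub>R Q))"
  shows "0 \<le> - p - q \<bullet> b - (1/2) * trace (S ** transpose S ** M) - F (u + c * A) (transpose S *v q)"
proof -
  define X where "X = S ** transpose S"
  have "X ** M = X ** (M - (2 * c * \<Lambda>) *\<^sub>R mat 1) + X ** ((2 * c * \<Lambda>) *\<^sub>R mat 1)"
    by (simp add: matrix_add_ldistrib[symmetric])
  then have tr: "trace (X ** M) = trace (X ** (M - (2 * c * \<Lambda>) *\<^sub>R mat 1)) + (2 * c * \<Lambda>) * trace X"
    by (simp add: trace_add trace_mult_scaleR_mat_one)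
  have F_shift: "F (u + c * A) (transpose S *v q) \<le> F u (transpose S *v (q - c *\<^sub>R Q))
          + kf * (c * A + c * norm (transpose S *v Q))"
    using F[rule_format, of "u + c * A" "transpose S *v q" u "transpose S *v (q - c *\<^sub>R Q)"] c A
    by (simp add: matrix_vector_mult_diff_distrib matrix_vector_mult_scaleR)
  have "Q \<bullet> b \<le> norm Q * g"
    using norm_cauchy_schwarz[of Q b] b by (smt (verit) mult_left_mono norm_ge_zero)
  moreover have "\<Lambda> * trace X \<le> \<Lambda> * g^2"
    unfolding X_def trace_mult_transpose_self using S \<Lambda> by (intro mult_left_mono power_mono) auto
  moreover have "kf * norm (transpose S *v Q) \<le> kf * g * norm Q"
    using norm_matrix_vector_mult_le[of "transpose S" Q] S kf
    by (simp add: norm_transpose_matrix mult.assoc mult_left_mono mult_right_mono order_trans)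
  ultimately have "Q \<bullet> b + \<Lambda> * trace X + kf * norm (transpose S *v Q) + kf * A \<le> vp * A"
    using growth by linarith
  then have "c * (Q \<bullet> b + \<Lambda> * trace X + kf * norm (transpose S *v Q) + kf * A) \<le> c * (vp * A)"
    using c by (rule mult_left_mono)
  then have "c * (Q \<bullet> b) + c * (\<Lambda> * trace X) + F (u + c * A) (transpose S *v q)
      \<le> vp * c * A + F u (transpose S *v (q - c *\<^sub>R Q))"
    using F_shift by (simp add: algebra_simps)
  then show ?thesis using Fv unfolding X_def[symmetric] tr by (simp add: inner_diff_left algebra_simps)
qed

context
  fixes T K m \<theta> vp Ca kf :: real
    and U :: "'u set" and E :: "(real^'d) set"
    and \<xi> :: "real \<Rightarrow> real^'d \<Rightarrow> 'u \<Rightarrow> real^'d"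
    and \<gamma> :: "real \<Rightarrow> real^'d \<Rightarrow> real^'d \<Rightarrow> real^'d"
    and a :: "real \<Rightarrow> real^'d \<Rightarrow> real^'d"
    and \<sigma> :: "real \<Rightarrow> real^'d \<Rightarrow> real^'d^'d"
    and f :: "real \<Rightarrow> real^'d \<Rightarrow> real \<Rightarrow> real^'d \<Rightarrow> real"
    and \<psi> :: "real^'d \<Rightarrow> real"
    and ell :: "real \<Rightarrow> real^'d \<Rightarrow> 'u \<Rightarrow> real"
    and chi :: "real \<Rightarrow> real^'d \<Rightarrow> real^'d \<Rightarrow> real"
    and v :: "real \<Rightarrow> real^'d \<Rightarrow> real"
  assumes v_super: "visc_supersol T U E \<xi> \<gamma> a \<sigma> f \<psi> ell chi v"
    and K: "0 < K" and m: "2 < m" and \<theta>: "0 \<le> \<theta>"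
    and xi_bd: "\<forall>t\<in>{0..T}. \<forall>x. \<forall>b\<in>U. norm (x + \<xi> t x b) \<le> max K (norm x)"
    and gamma_bd: "\<forall>t\<in>{0..T}. \<forall>x. \<forall>e\<in>E. norm (x + \<gamma> t x e) \<le> max K (norm x)"
    and a_sigma: "\<forall>t\<in>{0..T}. \<forall>x. norm (a t x) + norm (\<sigma> t x) \<le> Ca * (1 + norm x)"
    and Ca: "0 \<le> Ca"
    and f_lip: "\<forall>t\<in>{0..T}. \<forall>x y y' z z'.
                  \<bar>f t x y z - f t x y' z'\<bar> \<le> kf * (\<bar>y - y'\<bar> + norm (z - z'))"
    and kf: "0 \<le> kf"
    and vp: "penalty_rate K m Ca kf \<le> vp"
begin

lemma pde_part_add_penalty:
  fixes t :: real and x :: "real^'d"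
  defines "c \<equiv> \<theta> * exp (- vp * t)" and "A \<equiv> 1 + penalty K m x"
    and "Q \<equiv> penalty_grad K m x" and "\<Lambda> \<equiv> penalty_curv K m x"
  assumes tI: "t \<in> {0..T}"
    and Fv: "0 \<le> - (p + vp * c * A) - (q - c *\<^sub>R Q) \<bullet> a t x
               - (1/2) * trace (\<sigma> t x ** transpose (\<sigma> t x) ** (M - (2 * c * \<Lambda>) *\<^sub>R mat 1))
               - f t x u (transpose (\<sigma> t x) *v (q - c *\<^sub>R Q))"
  shows "0 \<le> - p - q \<bullet> a t x - (1/2) * trace (\<sigma> t x ** transpose (\<sigma> t x) ** M)
              - f t x (u + c * A) (transpose (\<sigma> t x) *v q)"
proof (rule pde_part_add_shift[OF _ _ kf _ _ _ spec[OF bspec[OF f_lip tI], of x] _ Fv])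
  have "norm (a t x) + norm (\<sigma> t x) \<le> Ca * (1 + norm x)" using a_sigma tI by blast
  then show "norm (a t x) \<le> Ca * (1 + norm x)" "norm (\<sigma> t x) \<le> Ca * (1 + norm x)"
    using norm_ge_zero[of "a t x"] norm_ge_zero[of "\<sigma> t x"] by linarith+
  show "norm Q * (Ca * (1 + norm x)) + \<Lambda> * (Ca * (1 + norm x))^2
          + kf * (Ca * (1 + norm x)) * norm Q + kf * A \<le> vp * A"
    using penalty_operator_growth[OF K m Ca kf, of x] mult_right_mono[OF vp, of A]
    unfolding Q_def \<Lambda>_def A_def by simp
qed (use \<theta> in \<open>auto simp: c_def A_def \<Lambda>_def\<close>)

lemma supersol_inequality_add_penalty:
  defines "W \<equiv> \<lambda>t x. v t x + \<theta> * exp (- vp * t) * (1 + penalty K m x)"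
  assumes t: "0 \<le> t" "t < T" and J: "(p, q, M) \<in> limsubjet T W t x"
  shows "0 \<le> min (ereal (W t x) - Mop T U \<xi> ell W t x)
               (max (ereal (W t x) - Hop T E \<gamma> chi W t x)
                    (ereal (- p - q \<bullet> a t x - (1/2) * trace (\<sigma> t x ** transpose (\<sigma> t x) ** M)
                            - f t x (W t x) (transpose (\<sigma> t x) *v q))))"
proof -
  define c where "c = \<theta> * exp (- vp * t)"
  define A where "A = 1 + penalty K m x"
  define Q where "Q = penalty_grad K m x"
  define \<Lambda> where "\<Lambda> = penalty_curv K m x"
  have tI: "t \<in> {0..T}" using t by simp
  have W_tx: "W t x = v t x + c * A" by (simp add: W_def c_def A_def)
  have J_v: "(p + vp * c * A, q - c *\<^sub>R Q, M - (2 * c * \<Lambda>) *\<^sub>R mat 1) \<in> limsubjet T v t x"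
    using limsubjet_add_penalty[OF K m \<theta> J[unfolded W_def]] by (simp add: c_def A_def Q_def \<Lambda>_def)
  define Fv where "Fv = - (p + vp * c * A) - (q - c *\<^sub>R Q) \<bullet> a t x
      - (1/2) * trace (\<sigma> t x ** transpose (\<sigma> t x) ** (M - (2 * c * \<Lambda>) *\<^sub>R mat 1))
      - f t x (v t x) (transpose (\<sigma> t x) *v (q - c *\<^sub>R Q))"
  have v_ineq: "0 \<le> min (ereal (v t x) - Mop T U \<xi> ell v t x)
                      (max (ereal (v t x) - Hop T E \<gamma> chi v t x) (ereal Fv))"
    unfolding Fv_def
    by (rule v_super[unfolded visc_supersol_def, THEN conjunct2, THEN conjunct2, THEN conjunct2,
          rule_format, OF conjI[OF t(1) conjI[OF t(2) J_v]]])
  have jump: "W t (x + d) - v t (x + d) \<le> W t x - v t x" if "norm (x + d) \<le> max K (norm x)" for d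
  proof -
    have "\<theta> * exp (- vp * t) * (1 + penalty K m (x + d)) \<le> \<theta> * exp (- vp * t) * (1 + penalty K m x)"
      using penalty_mono[of m "x + d" K x] m that \<theta> by (intro mult_left_mono) auto
    then show ?thesis by (simp add: W_def)
  qed
  have "Mop T U \<xi> ell v t x \<le> ereal (v t x)" using v_ineq by (simp add: ereal_diff_nonneg_iff)
  then have "Mop T U \<xi> ell W t x \<le> ereal (W t x)"
    by (rule Mop_le_of_shift) (intro ballI jump, use xi_bd tI in blast)
  moreover have "0 \<le> max (ereal (W t x) - Hop T E \<gamma> chi W t x)
                    (ereal (- p - q \<bullet> a t x - (1/2) * trace (\<sigma> t x ** transpose (\<sigma> t x) ** M)
                            - f t x (W t x) (transpose (\<sigma> t x) *v q)))"
  proof (cases "Hop T E \<gamma> chi v t x \<le> ereal (v t x)")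
    case True
    then have "Hop T E \<gamma> chi W t x \<le> ereal (W t x)"
      by (rule Hop_le_of_shift) (intro ballI jump, use gamma_bd tI in blast)
    then show ?thesis by (simp add: ereal_diff_nonneg_iff le_max_iff_disj)
  next
    case False
    then have "0 \<le> Fv" using v_ineq by (auto simp: ereal_diff_nonneg_iff max_def split: if_splits)
    then have "0 \<le> - p - q \<bullet> a t x - (1/2) * trace (\<sigma> t x ** transpose (\<sigma> t x) ** M)
                - f t x (v t x + c * A) (transpose (\<sigma> t x) *v q)"
      unfolding Fv_def c_def A_def Q_def \<Lambda>_def by (rule pde_part_add_penalty[OF tI])
    then show ?thesis by (simp add: W_tx le_max_iff_disj)
  qed
  ultimately show ?thesis by (simp add: ereal_diff_nonneg_iff)
qed

lemma visc_supersol_add_penalty: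
  "visc_supersol T U E \<xi> \<gamma> a \<sigma> f \<psi> ell chi (\<lambda>t x. v t x + \<theta> * exp (- vp * t) * (1 + penalty K m x))"
proof -
  have cont: "continuous_on UNIV (\<lambda>z::real \<times> (real^'d). \<theta> * exp (- vp * fst z) * (1 + penalty K m (snd z)))"
    using m by (intro continuous_intros continuous_on_compose2[OF continuous_on_penalty]) auto
  show ?thesis
    unfolding visc_supersol_def
  proof (intro conjI allI impI)
    show "locally_bounded_on T (\<lambda>t x. v t x + \<theta> * exp (- vp * t) * (1 + penalty K m x))"
      using locally_bounded_on_add_continuous[OF _ cont] v_super by (simp add: visc_supersol_def)
    show "lsc_on T (\<lambda>t x. v t x + \<theta> * exp (- vp * t) * (1 + penalty K m x))"
      using lsc_on_add_continuous[OF _ cont] v_super by (simp add: visc_supersol_def)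
    show "\<psi> x \<le> v T x + \<theta> * exp (- vp * T) * (1 + penalty K m x)" for x
      using v_super \<theta> by (simp add: visc_supersol_def add_increasing2)
  qed (use supersol_inequality_add_penalty in auto)
qed

end

theorem mainTheorem8:
  fixes T K kf :: real
    and U :: "'u::euclidean_space set" and E :: "(real^'d) set"
    and \<xi> :: "real \<Rightarrow> real^'d \<Rightarrow> 'u \<Rightarrow> real^'d"
    and \<gamma> :: "real \<Rightarrow> real^'d \<Rightarrow> real^'d \<Rightarrow> real^'d"
    and a :: "real \<Rightarrow> real^'d \<Rightarrow> real^'d"
    and \<sigma> :: "real \<Rightarrow> real^'d \<Rightarrow> real^'d^'d"
    and f :: "real \<Rightarrow> real^'d \<Rightarrow> real \<Rightarrow> real^'d \<Rightarrow> real"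
    and \<psi> :: "real^'d \<Rightarrow> real"
    and ell :: "real \<Rightarrow> real^'d \<Rightarrow> 'u \<Rightarrow> real"
    and chi :: "real \<Rightarrow> real^'d \<Rightarrow> real^'d \<Rightarrow> real"
    and v :: "real \<Rightarrow> real^'d \<Rightarrow> real"
    and C rr :: real
  assumes T: "T > 0"
    and E: "compact E" and U: "compact U"
    \<comment> \<open>(A1)\<close>
    and K: "K > 0"
    and xi_cont: "continuous_on ({0..T} \<times> UNIV \<times> U) (\<lambda>(t,x,b). \<xi> t x b)"
    and gamma_cont: "continuous_on ({0..T} \<times> UNIV \<times> E) (\<lambda>(t,x,e). \<gamma> t x e)"
    and xi_bd: "\<forall>t\<in>{0..T}. \<forall>x. \<forall>b\<in>U. norm (x + \<xi> t x b) \<le> max K (norm x)"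
    and gamma_bd: "\<forall>t\<in>{0..T}. \<forall>x. \<forall>e\<in>E. norm (x + \<gamma> t x e) \<le> max K (norm x)"
    and gamma_lip: "\<exists>L. \<forall>t\<in>{0..T}. \<forall>e\<in>E. \<forall>x y.
                       norm (\<gamma> t x e - \<gamma> t y e) \<le> L * norm (x - y)"
    \<comment> \<open>(A2)\<close>
    and a_sigma_growth: "\<exists>Ca. \<forall>t\<in>{0..T}. \<forall>x.
                       norm (a t x) + norm (\<sigma> t x) \<le> Ca * (1 + norm x)"
    and a_sigma_lip: "\<exists>L. \<forall>t\<in>{0..T}. \<forall>x y.
                       norm (a t x - a t y) + norm (\<sigma> t x - \<sigma> t y) \<le> L * norm (x - y)"
    \<comment> \<open>(A3)\<close>
    and f_cont: "\<forall>t\<in>{0..T}. \<forall>x. \<forall>\<epsilon>>0. \<exists>r>0. \<forall>s\<in>{0..T}. \<forall>y.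
                   dist (s,y) (t,x) < r \<longrightarrow> (\<forall>yy z. \<bar>f s y yy z - f t x yy z\<bar> < \<epsilon>)"
    and f_growth: "\<exists>Cf \<rho>. \<rho> > 0 \<and> (\<forall>t\<in>{0..T}. \<forall>x.
                      \<bar>f t x 0 0\<bar> \<le> Cf * (1 + norm x powr \<rho>))"
    and f_lip: "\<forall>t\<in>{0..T}. \<forall>x y y' z z'.
                  \<bar>f t x y z - f t x y' z'\<bar> \<le> kf * (\<bar>y - y'\<bar> + norm (z - z'))"
    \<comment> \<open>(A4)\<close>
    and psi_cont: "continuous_on UNIV \<psi>"
    and psi_growth: "\<exists>Cp p. \<forall>x. \<bar>\<psi> x\<bar> \<le> Cp * (1 + norm x powr p)"
    and psi_M: "\<forall>x. \<forall>b\<in>U. \<psi> (x + \<xi> T x b) - ell T x b \<le> \<psi> x"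
    and psi_H: "\<forall>x. \<forall>e\<in>E. \<psi> x \<le> \<psi> (x + \<gamma> T x e) + chi T x e"
    \<comment> \<open>(A5)\<close>
    and ell_pos: "\<exists>\<delta>>0. \<forall>t\<in>{0..T}. \<forall>x. \<forall>b\<in>U. ell t x b \<ge> \<delta>"
    and chi_nonneg: "\<forall>t\<in>{0..T}. \<forall>x. \<forall>e\<in>E. chi t x e \<ge> 0"
    and ell_cont: "continuous_on ({0..T} \<times> UNIV \<times> U) (\<lambda>(t,x,b). ell t x b)"
    and chi_cont: "continuous_on ({0..T} \<times> UNIV \<times> E) (\<lambda>(t,x,e). chi t x e)"
    and ell_growth: "\<exists>Cl p. \<forall>t\<in>{0..T}. \<forall>x. \<forall>b\<in>U. \<bar>ell t x b\<bar> \<le> Cl * (1 + norm x powr p)"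
    and chi_growth: "\<exists>Cc p. \<forall>t\<in>{0..T}. \<forall>x. \<forall>e\<in>E. \<bar>chi t x e\<bar> \<le> Cc * (1 + norm x powr p)"
    \<comment> \<open>the supersolution v and its growth\<close>
    and v_super: "visc_supersol T U E \<xi> \<gamma> a \<sigma> f \<psi> ell chi v"
    and C: "C > 0" and rho: "rr > 0"
    and v_growth: "\<forall>t\<in>{0..T}. \<forall>x. \<bar>v t x\<bar> \<le> C * (1 + norm x powr (2 * rr))"
  shows "\<exists>vp0>0. \<forall>vp>vp0. \<forall>\<theta>>0.
           visc_supersol T U E \<xi> \<gamma> a \<sigma> f \<psi> ell chi
             (\<lambda>t x. v t x + \<theta> * exp (- vp * t)
                        * (1 + (max (norm x - K) 0) powr (2 * rr + 2)))"
proof -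
  obtain Ca where Ca: "\<forall>t\<in>{0..T}. \<forall>x. norm (a t x) + norm (\<sigma> t x) \<le> Ca * (1 + norm x)"
    using a_sigma_growth by blast
  have "norm (a 0 0) + norm (\<sigma> 0 0) \<le> Ca"
    using spec[OF bspec[OF Ca], of 0 0] T by simp
  then have Ca0: "0 \<le> Ca"
    using norm_ge_zero[of "a 0 0"] norm_ge_zero[of "\<sigma> 0 0"] by linarith
  have kf0: "0 \<le> kf"
    using f_lip T by (force dest: bspec[of _ _ 0] spec[of _ 0] spec[of _ 1])
  define m where "m = 2 * rr + 2"
  have m: "2 < m" using rho by (simp add: m_def)
  show ?thesis
  proof (intro exI[of _ "penalty_rate K m Ca kf + 1"] conjI allI impI)
    show "0 < penalty_rate K m Ca kf + 1"
      using penalty_rate_nonneg[of K m Ca kf] K m Ca0 kf0 by simp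
    fix vp \<theta> :: real
    assume "penalty_rate K m Ca kf + 1 < vp" "0 < \<theta>"
    then have "visc_supersol T U E \<xi> \<gamma> a \<sigma> f \<psi> ell chi
                 (\<lambda>t x. v t x + \<theta> * exp (- vp * t) * (1 + penalty K m x))"
      by (intro visc_supersol_add_penalty[OF v_super K m _ xi_bd gamma_bd Ca Ca0 f_lip kf0]) auto
    then show "visc_supersol T U E \<xi> \<gamma> a \<sigma> f \<psi> ell chi
                 (\<lambda>t x. v t x + \<theta> * exp (- vp * t) * (1 + (max (norm x - K) 0) powr (2 * rr + 2)))"
      by (simp add: penalty_def excess_def m_def)
  qed
qed

end
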